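(* Assume $\mathrm{char}\,K\ne2$, $\prod_{i=1}^{n-1}(1+q^i)=0$, and $\mathcal H(D_n)$, $\mathcal H(D_{n-1})$ are split over $K$. Let $\lambda\in\mathcal P_n$ with $\lambda=h(\lambda)$. Then there is an $\mathcal H(D_{n-1})$-module isomorphism $$\mathrm{soc}\bigl(D_+^{\lambda}\!\downarrow_{\mathcal H(D_{n-1})}\bigr)\cong\mathrm{soc}\bigl(D_-^{\lambda}\!\downarrow_{\mathcal H(D_{n-1})}\bigr).$$
   Context: $K$ is a field, $q\in K^\times$ (a primitive $2\ell$-th root of unity under the hypotheses). $\mathcal H(B_m)$ is the $K$-algebra with generators $T_0,\dots,T_{m-1}$ and relations $T_0^2=1$; $(T_i+1)(T_i-q)=0$ for $1\le i\le m-1$; $T_0T_1T_0T_1=T_1T_0T_1T_0$; $T_iT_{i+1}T_i=T_{i+1}T_iT_{i+1}$; $T_iT_j=T_jT_i$ for $|i-j|>1$. $\mathcal H(D_m)$ is the subalgebra generated by $T_0T_1T_0,T_1,\dots,T_{m-1}$; $\mathcal H(D_{n-1})\subset\mathcal H(D_n)$ via generators of index $\le n-2$. For a bipartition $\lambda$ of $m$, $\tilde D^\lambda$ is the simple head of the Dipper–James–Mathas Specht module and $\mathcal P_m=\{\lambda:\tilde D^\lambda\ne0\}$. With $\sigma(T_0)=-T_0$, $\sigma(T_i)=T_i$ ($i\ne0$), $h$ is the involution of $\mathcal P_m$ with $(\tilde D^\lambda)^\sigma\cong\tilde D^{h(\lambda)}$. When $\mathcal H(D_n)$ is split and $\lambda=h(\lambda)$,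 $\tilde D^\lambda\!\downarrow_{\mathcal H(D_n)}=D_+^\lambda\oplus D_-^\lambda$ with $D_\pm^\lambda$ non-isomorphic irreducible $\mathcal H(D_n)$-modules. *)

theory Defs
  imports "Jordan_Normal_Form.Matrix"
begin

text \<open>Finite-dimensional representations are given by square matrices over the field:
  a representation of dimension d of an algebra with generators indexed by nat is a map
  rho :: nat => 'k mat, with rho i a d x d matrix for the relevant generators.
  Module = column space carrier_vec d with the matrix action.\<close>

text \<open>Representations of the Hecke algebra H(B_m): generators T_0,...,T_{m-1}.\<close>
definition HB_rep :: "'k::field \<Rightarrow> nat \<Rightarrow> nat \<Rightarrow> (nat \<Rightarrow> 'k mat) \<Rightarrow> bool" where
  "HB_rep q m d \<rho> \<longleftrightarrow>
     (\<forall>i<m. \<rho> i \<in> carrier_mat d d) \<and>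
     (0 < m \<longrightarrow> \<rho> 0 * \<rho> 0 = 1\<^sub>m d) \<and>
     (\<forall>i. 1 \<le> i \<and> i < m \<longrightarrow> (\<rho> i + 1\<^sub>m d) * (\<rho> i - q \<cdot>\<^sub>m 1\<^sub>m d) = 0\<^sub>m d d) \<and>
     (2 \<le> m \<longrightarrow> \<rho> 0 * \<rho> 1 * \<rho> 0 * \<rho> 1 = \<rho> 1 * \<rho> 0 * \<rho> 1 * \<rho> 0) \<and>
     (\<forall>i. 1 \<le> i \<and> i + 1 < m \<longrightarrow>
          \<rho> i * \<rho> (i+1) * \<rho> i = \<rho> (i+1) * \<rho> i * \<rho> (i+1)) \<and>
     (\<forall>i j. i < m \<and> j < m \<and> i + 1 < j \<longrightarrow> \<rho> i * \<rho> j = \<rho> j * \<rho> i)"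

text \<open>The generators of H(D_m) inside H(B_m): index 0 is T_0 T_1 T_0, index i>0 is T_i.\<close>
definition Dgen :: "(nat \<Rightarrow> 'k::field mat) \<Rightarrow> nat \<Rightarrow> 'k mat" where
  "Dgen \<rho> i = (if i = 0 then \<rho> 0 * \<rho> 1 * \<rho> 0 else \<rho> i)"

text \<open>Index set of the generators of H(D_m) (H(D_1) = K has no generators).\<close>
definition Dgens :: "nat \<Rightarrow> nat set" where
  "Dgens m = (if 2 \<le> m then {..<m} else {})"

datatype 'k ncp = Var nat | Cst 'k | Add "'k ncp" "'k ncp" | Mul "'k ncp" "'k ncp"

fun ncp_vars :: "'k ncp \<Rightarrow> nat set" where
  "ncp_vars (Var i) = {i}"
| "ncp_vars (Cst c) = {}"
| "ncp_vars (Add p r) = ncp_vars p \<union> ncp_vars r"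
| "ncp_vars (Mul p r) = ncp_vars p \<union> ncp_vars r"

fun ncp_eval :: "nat \<Rightarrow> (nat \<Rightarrow> 'k::field mat) \<Rightarrow> 'k ncp \<Rightarrow> 'k mat" where
  "ncp_eval d \<rho> (Var i) = \<rho> i"
| "ncp_eval d \<rho> (Cst c) = c \<cdot>\<^sub>m 1\<^sub>m d"
| "ncp_eval d \<rho> (Add p r) = ncp_eval d \<rho> p + ncp_eval d \<rho> r"
| "ncp_eval d \<rho> (Mul p r) = ncp_eval d \<rho> p * ncp_eval d \<rho> r"

text \<open>p is a relation of the subalgebra H(D_m) of H(B_m): p evaluated at the generators
  of H(D_m) vanishes in H(B_m), i.e. in every finite-dimensional H(B_m)-representation
  (equivalently in the faithful regular representation).\<close>
definition HD_relation :: "'k::field \<Rightarrow> nat \<Rightarrow> 'k ncp \<Rightarrow> bool" where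
  "HD_relation q m p \<longleftrightarrow> ncp_vars p \<subseteq> Dgens m \<and>
     (\<forall>d \<rho>. HB_rep q m d \<rho> \<longrightarrow> ncp_eval d (Dgen \<rho>) p = 0\<^sub>m d d)"

definition HD_rep :: "'k::field \<Rightarrow> nat \<Rightarrow> nat \<Rightarrow> (nat \<Rightarrow> 'k mat) \<Rightarrow> bool" where
  "HD_rep q m d \<rho> \<longleftrightarrow> (\<forall>i\<in>Dgens m. \<rho> i \<in> carrier_mat d d) \<and>
     (\<forall>p. HD_relation q m p \<longrightarrow> ncp_eval d \<rho> p = 0\<^sub>m d d)"

definition subspace_vec :: "nat \<Rightarrow> 'k::field vec set \<Rightarrow> bool" where
  "subspace_vec d W \<longleftrightarrow> W \<subseteq> carrier_vec d \<and> 0\<^sub>v d \<in> W \<and>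
     (\<forall>u\<in>W. \<forall>v\<in>W. u + v \<in> W) \<and> (\<forall>c. \<forall>v\<in>W. c \<cdot>\<^sub>v v \<in> W)"

definition invariant :: "nat \<Rightarrow> nat set \<Rightarrow> (nat \<Rightarrow> 'k::field mat) \<Rightarrow> 'k vec set \<Rightarrow> bool" where
  "invariant d G \<rho> W \<longleftrightarrow> subspace_vec d W \<and> (\<forall>i\<in>G. \<forall>v\<in>W. \<rho> i *\<^sub>v v \<in> W)"

definition simple_sub :: "nat \<Rightarrow> nat set \<Rightarrow> (nat \<Rightarrow> 'k::field mat) \<Rightarrow> 'k vec set \<Rightarrow> bool" where
  "simple_sub d G \<rho> W \<longleftrightarrow> invariant d G \<rho> W \<and> W \<noteq> {0\<^sub>v d} \<and>
     (\<forall>U. invariant d G \<rho> U \<and> U \<subseteq> W \<longrightarrow> U = {0\<^sub>v d} \<or> U = W)"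

definition irreducible_rep :: "nat \<Rightarrow> nat set \<Rightarrow> (nat \<Rightarrow> 'k::field mat) \<Rightarrow> bool" where
  "irreducible_rep d G \<rho> \<longleftrightarrow> simple_sub d G \<rho> (carrier_vec d)"

definition socle :: "nat \<Rightarrow> nat set \<Rightarrow> (nat \<Rightarrow> 'k::field mat) \<Rightarrow> 'k vec set \<Rightarrow> 'k vec set" where
  "socle d G \<rho> W = \<Inter>{U. subspace_vec d U \<and>
       (\<forall>S. simple_sub d G \<rho> S \<and> S \<subseteq> W \<longrightarrow> S \<subseteq> U)}"

definition module_iso :: "nat set \<Rightarrow> (nat \<Rightarrow> 'k::field mat) \<Rightarrow> 'k vec set \<Rightarrow>
     (nat \<Rightarrow> 'k mat) \<Rightarrow> 'k vec set \<Rightarrow> bool" where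
  "module_iso G \<rho>1 W1 \<rho>2 W2 \<longleftrightarrow> (\<exists>f. bij_betw f W1 W2 \<and>
     (\<forall>u\<in>W1. \<forall>v\<in>W1. f (u + v) = f u + f v) \<and>
     (\<forall>c. \<forall>v\<in>W1. f (c \<cdot>\<^sub>v v) = c \<cdot>\<^sub>v f v) \<and>
     (\<forall>i\<in>G. \<forall>v\<in>W1. f (\<rho>1 i *\<^sub>v v) = \<rho>2 i *\<^sub>v f v))"

text \<open>H(D_m) is split over K: every simple H(D_m)-module is absolutely simple,
  i.e. its endomorphism ring is K.\<close>
definition HD_split :: "'k::field \<Rightarrow> nat \<Rightarrow> bool" where
  "HD_split q m \<longleftrightarrow> (\<forall>d \<rho>. HD_rep q m d \<rho> \<and> irreducible_rep d (Dgens m) \<rho> \<longrightarrow>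
     (\<forall>A\<in>carrier_mat d d. (\<forall>i\<in>Dgens m. A * \<rho> i = \<rho> i * A) \<longrightarrow>
        (\<exists>c. A = c \<cdot>\<^sub>m 1\<^sub>m d)))"

definition sigma_twist :: "(nat \<Rightarrow> 'k::field mat) \<Rightarrow> nat \<Rightarrow> 'k mat" where
  "sigma_twist \<rho> i = (if i = 0 then - \<rho> 0 else \<rho> i)"

end

theory Submission
  imports Defs
begin

text \<open>Conjugation by \<open>T\<^sub>0\<close> normalises \<open>\<H>(D\<^sub>n)\<close>, so \<open>T\<^sub>0\<close> maps the summand \<open>D\<^sub>+\<close> onto a simple
  \<open>\<H>(D\<^sub>n)\<close>-submodule of \<open>D\<^sub>+ \<oplus> D\<^sub>-\<close>. It is not \<open>D\<^sub>+\<close>, since then \<open>D\<^sub>+\<close> would be an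
  \<open>\<H>(B\<^sub>n)\<close>-submodule, and it meets both summands trivially only if it is the graph of an
  isomorphism \<open>D\<^sub>+ \<cong> D\<^sub>-\<close>; hence \<open>T\<^sub>0 D\<^sub>+ = D\<^sub>-\<close>.
  The element \<open>L = T\<^sub>n\<^sub>-\<^sub>1 \<cdots> T\<^sub>1 T\<^sub>0 T\<^sub>1 \<cdots> T\<^sub>n\<^sub>-\<^sub>1\<close> is invertible, centralises
  \<open>\<H>(D\<^sub>n\<^sub>-\<^sub>1)\<close>, and \<open>T\<^sub>0 L\<close> lies in \<open>\<H>(D\<^sub>n)\<close>. So \<open>L\<close> maps \<open>D\<^sub>+\<close> onto \<open>T\<^sub>0 D\<^sub>+ = D\<^sub>-\<close>, and as an
  \<open>\<H>(D\<^sub>n\<^sub>-\<^sub>1)\<close>-automorphism of the whole module it carries the socle of \<open>D\<^sub>+\<close> onto that of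
  \<open>D\<^sub>-\<close>.\<close>

lemma subspace_vec_carrier: "subspace_vec d W \<Longrightarrow> v \<in> W \<Longrightarrow> v \<in> carrier_vec d"
  unfolding subspace_vec_def by blast

lemma subspace_vec_zero: "subspace_vec d W \<Longrightarrow> 0\<^sub>v d \<in> W"
  unfolding subspace_vec_def by blast

lemma subspace_vec_add: "subspace_vec d W \<Longrightarrow> u \<in> W \<Longrightarrow> v \<in> W \<Longrightarrow> u + v \<in> W"
  unfolding subspace_vec_def by blast

lemma subspace_vec_smult: "subspace_vec d W \<Longrightarrow> v \<in> W \<Longrightarrow> c \<cdot>\<^sub>v v \<in> W"
  unfolding subspace_vec_def by blast

lemma subspace_vec_diff:
  assumes W: "subspace_vec d W" and u: "u \<in> W" and v: "v \<in> W"
  shows "u - v \<in> (W :: 'k::field vec set)"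
proof -
  have "u - v = u + (-1) \<cdot>\<^sub>v v"
    using subspace_vec_carrier[OF W u] subspace_vec_carrier[OF W v] by (intro eq_vecI) auto
  thus ?thesis using subspace_vec_add[OF W u subspace_vec_smult[OF W v]] by simp
qed

lemma vec_eq_of_diff_zero:
  assumes "u \<in> carrier_vec d" "v \<in> carrier_vec d" "u - v = 0\<^sub>v d"
  shows "u = (v :: 'k::field vec)"
proof (rule eq_vecI)
  fix i assume "i < dim_vec v"
  thus "u $ i = v $ i" using assms index_minus_vec(1)[of i v u] by (metis carrier_vecD eq_iff_diff_eq_0 index_zero_vec(1))
qed (use assms in simp)

lemma invariant_subspace: "invariant d G \<sigma> W \<Longrightarrow> subspace_vec d W"
  unfolding invariant_def by blast

lemma invariant_act: "invariant d G \<sigma> W \<Longrightarrow> i \<in> G \<Longrightarrow> v \<in> W \<Longrightarrow> \<sigma> i *\<^sub>v v \<in> W"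
  unfolding invariant_def by blast

lemma invariant_Int: "invariant d G \<sigma> U \<Longrightarrow> invariant d G \<sigma> W \<Longrightarrow> invariant d G \<sigma> (U \<inter> W)"
  unfolding invariant_def subspace_vec_def by auto

lemma simple_sub_invariant: "simple_sub d G \<sigma> W \<Longrightarrow> invariant d G \<sigma> W"
  unfolding simple_sub_def by blast

lemma simple_sub_minimal:
  "simple_sub d G \<sigma> W \<Longrightarrow> invariant d G \<sigma> U \<Longrightarrow> U \<subseteq> W \<Longrightarrow> U = {0\<^sub>v d} \<or> U = W"
  unfolding simple_sub_def by blast

lemma simple_sub_nonzero: assumes "simple_sub d G \<sigma> W" shows "\<exists>x\<in>W. x \<noteq> 0\<^sub>v d"
proof -
  have "W \<noteq> {0\<^sub>v d}" using assms unfolding simple_sub_def by blast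
  moreover have "0\<^sub>v d \<in> W"
    using subspace_vec_zero[OF invariant_subspace[OF simple_sub_invariant[OF assms]]] .
  ultimately show ?thesis by blast
qed

lemma socle_subset_carrier: "socle d G \<sigma> W \<subseteq> carrier_vec d"
proof -
  have "subspace_vec d (carrier_vec d)" unfolding subspace_vec_def by auto
  moreover have "\<forall>S. simple_sub d G \<sigma> S \<and> S \<subseteq> W \<longrightarrow> S \<subseteq> carrier_vec d"
    unfolding simple_sub_def invariant_def subspace_vec_def by simp
  ultimately show ?thesis unfolding socle_def by blast
qed

lemma diagonal_submodule_projection_onto:
  fixes A B X :: "'k::field vec set"
  assumes A: "simple_sub d G \<sigma> A" and B: "invariant d G \<sigma> B" and X: "invariant d G \<sigma> X"
    and act_carrier: "\<And>i. i \<in> G \<Longrightarrow> \<sigma> i \<in> carrier_mat d d"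
    and XB: "X \<inter> B = {0\<^sub>v d}" and X_nonzero: "\<exists>x\<in>X. x \<noteq> 0\<^sub>v d"
    and X_sum: "\<forall>x\<in>X. \<exists>a\<in>A. \<exists>b\<in>B. x = a + b"
  shows "\<forall>a\<in>A. \<exists>b\<in>B. a + b \<in> X"
proof -
  let ?I = "{a \<in> A. \<exists>b\<in>B. a + b \<in> X}"
  have sA: "subspace_vec d A" using invariant_subspace[OF simple_sub_invariant[OF A]] .
  have sB: "subspace_vec d B" using invariant_subspace[OF B] .
  have sX: "subspace_vec d X" using invariant_subspace[OF X] .
  have "invariant d G \<sigma> ?I"
    unfolding invariant_def subspace_vec_def
  proof (intro conjI ballI allI)
    show "?I \<subseteq> carrier_vec d" using sA subspace_vec_carrier by blast
    have "0\<^sub>v d + 0\<^sub>v d = (0\<^sub>v d :: 'k vec)" by simp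
    thus "0\<^sub>v d \<in> ?I" using subspace_vec_zero[OF sA] subspace_vec_zero[OF sB] subspace_vec_zero[OF sX]
      by force
  next
    fix u v assume u: "u \<in> ?I" and v: "v \<in> ?I"
    then obtain b b' where b: "b \<in> B" "u + b \<in> X" and b': "b' \<in> B" "v + b' \<in> X" by auto
    have "u \<in> carrier_vec d" "v \<in> carrier_vec d" "b \<in> carrier_vec d" "b' \<in> carrier_vec d"
      using u v b b' sA sB subspace_vec_carrier by auto
    hence "(u + v) + (b + b') = (u + b) + (v + b')" by (intro eq_vecI) auto
    hence "(u + v) + (b + b') \<in> X" using subspace_vec_add[OF sX b(2) b'(2)] by simp
    moreover have "u + v \<in> A" "b + b' \<in> B" using u v b b' sA sB subspace_vec_add by auto
    ultimately show "u + v \<in> ?I" by blast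
  next
    fix c v assume v: "v \<in> ?I"
    then obtain b where b: "b \<in> B" "v + b \<in> X" by auto
    have "v \<in> carrier_vec d" "b \<in> carrier_vec d" using v b sA sB subspace_vec_carrier by auto
    hence "c \<cdot>\<^sub>v (v + b) = c \<cdot>\<^sub>v v + c \<cdot>\<^sub>v b" by (rule smult_add_distrib_vec)
    hence "c \<cdot>\<^sub>v v + c \<cdot>\<^sub>v b \<in> X" using subspace_vec_smult[OF sX b(2), of c] by simp
    thus "c \<cdot>\<^sub>v v \<in> ?I" using v b sA sB subspace_vec_smult by blast
  next
    fix i v assume i: "i \<in> G" and v: "v \<in> ?I"
    then obtain b where b: "b \<in> B" "v + b \<in> X" by auto
    have "v \<in> carrier_vec d" "b \<in> carrier_vec d" using v b sA sB subspace_vec_carrier by auto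
    hence "\<sigma> i *\<^sub>v (v + b) = \<sigma> i *\<^sub>v v + \<sigma> i *\<^sub>v b"
      using act_carrier[OF i] by (intro mult_add_distrib_mat_vec)
    hence "\<sigma> i *\<^sub>v v + \<sigma> i *\<^sub>v b \<in> X" using invariant_act[OF X i b(2)] by simp
    thus "\<sigma> i *\<^sub>v v \<in> ?I"
      using v b i invariant_act[OF simple_sub_invariant[OF A]] invariant_act[OF B] by blast
  qed
  moreover have "?I \<noteq> {0\<^sub>v d}"
  proof
    assume I_zero: "?I = {0\<^sub>v d}"
    obtain x where x: "x \<in> X" "x \<noteq> 0\<^sub>v d" using X_nonzero by blast
    then obtain a b where ab: "a \<in> A" "b \<in> B" "x = a + b" using X_sum by blast
    hence "a = 0\<^sub>v d" using x I_zero by blast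
    moreover have "b \<in> carrier_vec d" using ab sB subspace_vec_carrier by blast
    ultimately have "x = b" using ab by simp
    thus False using x XB ab by blast
  qed
  ultimately have "?I = A" using simple_sub_minimal[OF A] by blast
  thus ?thesis by blast
qed

lemma diagonal_partner_unique:
  fixes B X :: "'k::field vec set"
  assumes B: "subspace_vec d B" and X: "subspace_vec d X" and XB: "X \<inter> B = {0\<^sub>v d}"
    and a: "a \<in> carrier_vec d" and b: "b \<in> B" "b' \<in> B" and ab: "a + b \<in> X" "a + b' \<in> X"
  shows "b = b'"
proof -
  have "b \<in> carrier_vec d" "b' \<in> carrier_vec d" using b subspace_vec_carrier[OF B] by auto
  hence "(a + b) - (a + b') = b - b'" using a by (intro eq_vecI) auto
  hence "b - b' \<in> X" using subspace_vec_diff[OF X ab] by simp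
  with subspace_vec_diff[OF B b] have "b - b' = 0\<^sub>v d" using XB by blast
  thus "b = b'" using vec_eq_of_diff_zero b subspace_vec_carrier[OF B] by blast
qed

lemma diagonal_graph_bij:
  fixes A B X :: "'k::field vec set"
  assumes A: "subspace_vec d A" and B: "subspace_vec d B" and X: "subspace_vec d X"
    and XA: "X \<inter> A = {0\<^sub>v d}" and XB: "X \<inter> B = {0\<^sub>v d}"
    and onto_A: "\<forall>a\<in>A. \<exists>b\<in>B. a + b \<in> X" and onto_B: "\<forall>b\<in>B. \<exists>a\<in>A. b + a \<in> X"
  obtains \<phi> where "bij_betw \<phi> A B" and "\<And>a. a \<in> A \<Longrightarrow> \<phi> a \<in> B \<and> a + \<phi> a \<in> X"
proof
  define \<phi> where "\<phi> a = (SOME b. b \<in> B \<and> a + b \<in> X)" for a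
  show \<phi>: "\<phi> a \<in> B \<and> a + \<phi> a \<in> X" if "a \<in> A" for a
  proof -
    have "\<exists>b. b \<in> B \<and> a + b \<in> X" using onto_A that by blast
    thus ?thesis unfolding \<phi>_def by (rule someI_ex)
  qed
  have "inj_on \<phi> A"
  proof (rule inj_onI)
    fix a a' assume a: "a \<in> A" "a' \<in> A" and eq: "\<phi> a = \<phi> a'"
    have "\<phi> a \<in> carrier_vec d" using \<phi>[OF a(1)] subspace_vec_carrier[OF B] by blast
    moreover have "a + \<phi> a = \<phi> a + a" "a' + \<phi> a = \<phi> a + a'"
      using a subspace_vec_carrier[OF A] calculation comm_add_vec by metis+
    ultimately show "a = a'"
      using diagonal_partner_unique[OF A X XA _ a] \<phi> a eq by metis
  qed
  moreover have "B \<subseteq> \<phi> ` A"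
  proof
    fix b assume b: "b \<in> B"
    then obtain a where a: "a \<in> A" "b + a \<in> X" using onto_B by blast
    have "b + a = a + b" using b a subspace_vec_carrier[OF A] subspace_vec_carrier[OF B] comm_add_vec
      by metis
    hence "\<phi> a = b"
      using diagonal_partner_unique[OF B X XB _ _ b] \<phi>[OF a(1)] a subspace_vec_carrier[OF A] by metis
    thus "b \<in> \<phi> ` A" using a(1) by blast
  qed
  ultimately show "bij_betw \<phi> A B" using \<phi> unfolding bij_betw_def by blast
qed

lemma module_iso_of_diagonal_submodule:
  fixes A B X :: "'k::field vec set"
  assumes A: "simple_sub d G \<sigma> A" and B: "simple_sub d G \<sigma> B" and X: "invariant d G \<sigma> X"
    and act_carrier: "\<And>i. i \<in> G \<Longrightarrow> \<sigma> i \<in> carrier_mat d d"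
    and XA: "X \<inter> A = {0\<^sub>v d}" and XB: "X \<inter> B = {0\<^sub>v d}" and X_nonzero: "\<exists>x\<in>X. x \<noteq> 0\<^sub>v d"
    and X_sum: "\<forall>x\<in>X. \<exists>a\<in>A. \<exists>b\<in>B. x = a + b"
  shows "module_iso G \<sigma> A \<sigma> B"
proof -
  have sA: "subspace_vec d A" using invariant_subspace[OF simple_sub_invariant[OF A]] .
  have sB: "subspace_vec d B" using invariant_subspace[OF simple_sub_invariant[OF B]] .
  have sX: "subspace_vec d X" using invariant_subspace[OF X] .
  have cA: "\<And>a. a \<in> A \<Longrightarrow> a \<in> carrier_vec d" using subspace_vec_carrier[OF sA] .
  have cB: "\<And>b. b \<in> B \<Longrightarrow> b \<in> carrier_vec d" using subspace_vec_carrier[OF sB] .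
  have onto_A: "\<forall>a\<in>A. \<exists>b\<in>B. a + b \<in> X"
    using diagonal_submodule_projection_onto[OF A simple_sub_invariant[OF B] X act_carrier XB
        X_nonzero X_sum] .
  have "\<forall>x\<in>X. \<exists>b\<in>B. \<exists>a\<in>A. x = b + a"
  proof
    fix x assume "x \<in> X"
    then obtain a b where ab: "a \<in> A" "b \<in> B" "x = a + b" using X_sum by blast
    hence "x = b + a" using comm_add_vec[OF cA cB] by simp
    thus "\<exists>b\<in>B. \<exists>a\<in>A. x = b + a" using ab by blast
  qed
  from diagonal_submodule_projection_onto[OF B simple_sub_invariant[OF A] X act_carrier XA
      X_nonzero this]
  have onto_B: "\<forall>b\<in>B. \<exists>a\<in>A. b + a \<in> X" .
  obtain \<phi> where bij: "bij_betw \<phi> A B" and \<phi>: "\<And>a. a \<in> A \<Longrightarrow> \<phi> a \<in> B \<and> a + \<phi> a \<in> X"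
    using diagonal_graph_bij[OF sA sB sX XA XB onto_A onto_B] by blast
  have \<phi>_eq: "\<phi> a = b" if "a \<in> A" "b \<in> B" "a + b \<in> X" for a b
    using diagonal_partner_unique[OF sB sX XB cA[OF that(1)] _ that(2)] \<phi> that by metis
  show ?thesis unfolding module_iso_def
  proof (intro exI[of _ \<phi>] conjI ballI allI bij)
    fix u v assume u: "u \<in> A" and v: "v \<in> A"
    have "u \<in> carrier_vec d" "v \<in> carrier_vec d" "\<phi> u \<in> carrier_vec d" "\<phi> v \<in> carrier_vec d"
      using u v \<phi> cA cB by auto
    hence "(u + v) + (\<phi> u + \<phi> v) = (u + \<phi> u) + (v + \<phi> v)" by (intro eq_vecI) auto
    moreover have "(u + \<phi> u) + (v + \<phi> v) \<in> X" using subspace_vec_add[OF sX] \<phi> u v by blast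
    ultimately have "(u + v) + (\<phi> u + \<phi> v) \<in> X" by simp
    moreover have "u + v \<in> A" "\<phi> u + \<phi> v \<in> B"
      using subspace_vec_add[OF sA u v] subspace_vec_add[OF sB] \<phi> u v by auto
    ultimately show "\<phi> (u + v) = \<phi> u + \<phi> v" using \<phi>_eq by blast
  next
    fix c v assume v: "v \<in> A"
    have "c \<cdot>\<^sub>v v + c \<cdot>\<^sub>v \<phi> v = c \<cdot>\<^sub>v (v + \<phi> v)"
      using smult_add_distrib_vec[OF cA[OF v] cB] \<phi>[OF v] by simp
    moreover have "c \<cdot>\<^sub>v (v + \<phi> v) \<in> X" using subspace_vec_smult[OF sX] \<phi> v by blast
    ultimately have "c \<cdot>\<^sub>v v + c \<cdot>\<^sub>v \<phi> v \<in> X" by simp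
    moreover have "c \<cdot>\<^sub>v v \<in> A" "c \<cdot>\<^sub>v \<phi> v \<in> B"
      using subspace_vec_smult[OF sA v] subspace_vec_smult[OF sB] \<phi> v by auto
    ultimately show "\<phi> (c \<cdot>\<^sub>v v) = c \<cdot>\<^sub>v \<phi> v" using \<phi>_eq by blast
  next
    fix i v assume i: "i \<in> G" and v: "v \<in> A"
    have "\<sigma> i *\<^sub>v v + \<sigma> i *\<^sub>v \<phi> v = \<sigma> i *\<^sub>v (v + \<phi> v)"
      using mult_add_distrib_mat_vec[OF act_carrier[OF i] cA[OF v] cB] \<phi>[OF v] by simp
    moreover have "\<sigma> i *\<^sub>v (v + \<phi> v) \<in> X" using invariant_act[OF X i] \<phi> v by blast
    ultimately have "\<sigma> i *\<^sub>v v + \<sigma> i *\<^sub>v \<phi> v \<in> X" by simp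
    moreover have "\<sigma> i *\<^sub>v v \<in> A" "\<sigma> i *\<^sub>v \<phi> v \<in> B"
      using invariant_act[OF simple_sub_invariant[OF A] i v] invariant_act[OF simple_sub_invariant[OF B] i]
        \<phi> v by auto
    ultimately show "\<phi> (\<sigma> i *\<^sub>v v) = \<sigma> i *\<^sub>v \<phi> v" using \<phi>_eq by blast
  qed
qed

locale module_endo =
  fixes d :: nat and G :: "nat set" and \<sigma> :: "nat \<Rightarrow> 'k::field mat" and f :: "'k vec \<Rightarrow> 'k vec"
  assumes f_carrier: "\<And>v. v \<in> carrier_vec d \<Longrightarrow> f v \<in> carrier_vec d"
    and f_add: "\<And>u v. u \<in> carrier_vec d \<Longrightarrow> v \<in> carrier_vec d \<Longrightarrow> f (u + v) = f u + f v"
    and f_smult: "\<And>c v. v \<in> carrier_vec d \<Longrightarrow> f (c \<cdot>\<^sub>v v) = c \<cdot>\<^sub>v f v"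
    and f_commute: "\<And>i v. i \<in> G \<Longrightarrow> v \<in> carrier_vec d \<Longrightarrow> f (\<sigma> i *\<^sub>v v) = \<sigma> i *\<^sub>v f v"
    and act_carrier: "\<And>i. i \<in> G \<Longrightarrow> \<sigma> i \<in> carrier_mat d d"
begin

lemma f_zero: "f (0\<^sub>v d) = 0\<^sub>v d"
proof -
  have "f (0\<^sub>v d) = f (0 \<cdot>\<^sub>v 0\<^sub>v d)" by (rule arg_cong[of _ _ f], rule eq_vecI) auto
  also have "\<dots> = 0 \<cdot>\<^sub>v f (0\<^sub>v d)" by (rule f_smult) simp
  also have "\<dots> = 0\<^sub>v d" using f_carrier[of "0\<^sub>v d"] by auto
  finally show ?thesis .
qed

lemma subspace_vec_image:
  assumes U: "subspace_vec d U" shows "subspace_vec d (f ` U)"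
  unfolding subspace_vec_def
proof (intro conjI ballI allI)
  have U_carrier: "U \<subseteq> carrier_vec d" using subspace_vec_carrier[OF U] by blast
  show "f ` U \<subseteq> carrier_vec d" using U_carrier f_carrier by auto
  show "0\<^sub>v d \<in> f ` U" using subspace_vec_zero[OF U] f_zero by (metis image_eqI)
  fix u v assume "u \<in> f ` U" "v \<in> f ` U"
  then obtain a b where "a \<in> U" "b \<in> U" "u = f a" "v = f b" by auto
  thus "u + v \<in> f ` U"
    using subspace_vec_add[OF U] f_add[of a b] U_carrier by (metis image_eqI subsetD)
next
  fix c v assume "v \<in> f ` U"
  then obtain a where "a \<in> U" "v = f a" by auto
  thus "c \<cdot>\<^sub>v v \<in> f ` U"
    using subspace_vec_smult[OF U] f_smult[of a c] subspace_vec_carrier[OF U] by (metis image_eqI)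
qed

lemma invariant_image:
  assumes U: "invariant d G \<sigma> U" shows "invariant d G \<sigma> (f ` U)"
  unfolding invariant_def
proof (intro conjI ballI)
  show "subspace_vec d (f ` U)" using subspace_vec_image[OF invariant_subspace[OF U]] .
  fix i v assume i: "i \<in> G" and "v \<in> f ` U"
  then obtain a where a: "a \<in> U" "v = f a" by auto
  have "\<sigma> i *\<^sub>v v = f (\<sigma> i *\<^sub>v a)"
    using a f_commute[OF i] subspace_vec_carrier[OF invariant_subspace[OF U]] by simp
  thus "\<sigma> i *\<^sub>v v \<in> f ` U" using invariant_act[OF U i a(1)] by simp
qed

end

locale module_auto = module_endo +
  fixes g :: "'k::field vec \<Rightarrow> 'k vec"
  assumes g_carrier: "\<And>v. v \<in> carrier_vec d \<Longrightarrow> g v \<in> carrier_vec d"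
    and f_g: "\<And>v. v \<in> carrier_vec d \<Longrightarrow> f (g v) = v"
    and g_f: "\<And>v. v \<in> carrier_vec d \<Longrightarrow> g (f v) = v"
begin

lemma inverse_module_endo: "module_endo d G \<sigma> g"
proof
  fix u v :: "'k vec" assume uv: "u \<in> carrier_vec d" "v \<in> carrier_vec d"
  have "g (u + v) = g (f (g u) + f (g v))" using uv f_g by simp
  also have "\<dots> = g (f (g u + g v))" using uv g_carrier f_add by simp
  also have "\<dots> = g u + g v" using uv g_carrier g_f by simp
  finally show "g (u + v) = g u + g v" .
next
  fix c and v :: "'k vec" assume v: "v \<in> carrier_vec d"
  have "g (c \<cdot>\<^sub>v v) = g (c \<cdot>\<^sub>v f (g v))" using v f_g by simp
  also have "\<dots> = g (f (c \<cdot>\<^sub>v g v))" using v g_carrier f_smult by simp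
  also have "\<dots> = c \<cdot>\<^sub>v g v" using v g_carrier g_f by simp
  finally show "g (c \<cdot>\<^sub>v v) = c \<cdot>\<^sub>v g v" .
next
  fix i and v :: "'k vec" assume iv: "i \<in> G" "v \<in> carrier_vec d"
  have "\<sigma> i *\<^sub>v g v \<in> carrier_vec d" using act_carrier[OF iv(1)] g_carrier[OF iv(2)] by simp
  moreover have "g (\<sigma> i *\<^sub>v v) = g (f (\<sigma> i *\<^sub>v g v))" using iv f_g g_carrier f_commute by simp
  ultimately show "g (\<sigma> i *\<^sub>v v) = \<sigma> i *\<^sub>v g v" using g_f by simp
qed (use g_carrier act_carrier in auto)

lemma inverse_module_auto: "module_auto d G \<sigma> g f"
  by (intro module_auto.intro inverse_module_endo module_auto_axioms.intro)
    (auto simp: f_carrier f_g g_f)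

lemma g_image_f_image: "S \<subseteq> carrier_vec d \<Longrightarrow> g ` f ` S = S"
  using g_f by (force simp: image_image)

lemma f_image_g_image: "S \<subseteq> carrier_vec d \<Longrightarrow> f ` g ` S = S"
  using f_g by (force simp: image_image)

lemma simple_sub_image:
  assumes S: "simple_sub d G \<sigma> S" shows "simple_sub d G \<sigma> (f ` S)"
proof -
  have S_inv: "invariant d G \<sigma> S" using simple_sub_invariant[OF S] .
  have S_carrier: "S \<subseteq> carrier_vec d"
    using subspace_vec_carrier[OF invariant_subspace[OF S_inv]] by blast
  have "f ` S \<noteq> {0\<^sub>v d}"
  proof
    assume image_zero: "f ` S = {0\<^sub>v d}"
    obtain x where x: "x \<in> S" "x \<noteq> 0\<^sub>v d" using simple_sub_nonzero[OF S] by blast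
    have "f x \<in> f ` S" using x(1) by blast
    hence "f x = f (0\<^sub>v d)" using image_zero f_zero by simp
    hence "g (f x) = g (f (0\<^sub>v d))" by simp
    thus False using x S_carrier g_f by auto
  qed
  moreover have "U = {0\<^sub>v d} \<or> U = f ` S" if U: "invariant d G \<sigma> U" "U \<subseteq> f ` S" for U
  proof -
    have "invariant d G \<sigma> (g ` U)" using module_endo.invariant_image[OF inverse_module_endo U(1)] .
    moreover have "g ` U \<subseteq> S" using U(2) g_image_f_image[OF S_carrier] by blast
    ultimately have "g ` U = {0\<^sub>v d} \<or> g ` U = S" using simple_sub_minimal[OF S] by blast
    moreover have "U \<subseteq> carrier_vec d"
      using subspace_vec_carrier[OF invariant_subspace[OF U(1)]] by blast
    hence "U = f ` g ` U" using f_image_g_image by simp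
    ultimately show ?thesis using f_zero by auto
  qed
  ultimately show ?thesis using invariant_image[OF S_inv] unfolding simple_sub_def by blast
qed

lemma image_socle_subset:
  assumes W: "W \<subseteq> carrier_vec d"
  shows "f ` socle d G \<sigma> W \<subseteq> socle d G \<sigma> (f ` W)"
proof
  fix y assume "y \<in> f ` socle d G \<sigma> W"
  then obtain x where x: "x \<in> socle d G \<sigma> W" "y = f x" by auto
  show "y \<in> socle d G \<sigma> (f ` W)"
    unfolding socle_def
  proof (rule InterI, clarify)
    fix U assume U: "subspace_vec d U" "\<forall>S. simple_sub d G \<sigma> S \<and> S \<subseteq> f ` W \<longrightarrow> S \<subseteq> U"
    have "subspace_vec d (g ` U)" using module_endo.subspace_vec_image[OF inverse_module_endo U(1)] .
    moreover have "S \<subseteq> g ` U" if S: "simple_sub d G \<sigma> S" "S \<subseteq> W" for S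
    proof -
      have "f ` S \<subseteq> U" using U(2) S simple_sub_image by blast
      hence "g ` f ` S \<subseteq> g ` U" by blast
      moreover have "g ` f ` S = S" using g_image_f_image[OF subset_trans[OF S(2) W]] .
      ultimately show ?thesis by simp
    qed
    ultimately have "g ` U \<in> {U. subspace_vec d U \<and> (\<forall>S. simple_sub d G \<sigma> S \<and> S \<subseteq> W \<longrightarrow> S \<subseteq> U)}"
      by blast
    with x(1)[unfolded socle_def] have "x \<in> g ` U" by (rule InterD)
    hence "f x \<in> f ` g ` U" by blast
    moreover have "U \<subseteq> carrier_vec d" using subspace_vec_carrier[OF U(1)] by blast
    hence "f ` g ` U = U" by (rule f_image_g_image)
    ultimately show "y \<in> U" using x(2) by simp
  qed
qed

lemma image_socle:
  assumes W: "W \<subseteq> carrier_vec d"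
  shows "f ` socle d G \<sigma> W = socle d G \<sigma> (f ` W)"
proof
  show "f ` socle d G \<sigma> W \<subseteq> socle d G \<sigma> (f ` W)" using image_socle_subset[OF W] .
  have "f ` W \<subseteq> carrier_vec d" using W f_carrier by auto
  hence "g ` socle d G \<sigma> (f ` W) \<subseteq> socle d G \<sigma> (g ` f ` W)"
    by (rule module_auto.image_socle_subset[OF inverse_module_auto])
  hence "g ` socle d G \<sigma> (f ` W) \<subseteq> socle d G \<sigma> W" using g_image_f_image[OF W] by simp
  hence "f ` g ` socle d G \<sigma> (f ` W) \<subseteq> f ` socle d G \<sigma> W" by blast
  thus "socle d G \<sigma> (f ` W) \<subseteq> f ` socle d G \<sigma> W"
    using f_image_g_image[OF socle_subset_carrier] by simp
qed

lemma module_iso_socle_image: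
  assumes W: "W \<subseteq> carrier_vec d"
  shows "module_iso G \<sigma> (socle d G \<sigma> W) \<sigma> (socle d G \<sigma> (f ` W))"
  unfolding module_iso_def
proof (intro exI[of _ f] conjI ballI allI)
  have "inj_on f (socle d G \<sigma> W)"
    using g_f socle_subset_carrier by (metis inj_on_inverseI subsetD)
  thus "bij_betw f (socle d G \<sigma> W) (socle d G \<sigma> (f ` W))"
    using image_socle[OF W] by (simp add: bij_betw_def)
next
  fix u v assume "u \<in> socle d G \<sigma> W" "v \<in> socle d G \<sigma> W"
  thus "f (u + v) = f u + f v" using socle_subset_carrier f_add by blast
next
  fix c v assume "v \<in> socle d G \<sigma> W"
  thus "f (c \<cdot>\<^sub>v v) = c \<cdot>\<^sub>v f v" using socle_subset_carrier f_smult by blast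
next
  fix i v assume "i \<in> G" "v \<in> socle d G \<sigma> W"
  thus "f (\<sigma> i *\<^sub>v v) = \<sigma> i *\<^sub>v f v" using socle_subset_carrier f_commute by blast
qed

lemma image_eq_of_swapping_summands:
  assumes A: "subspace_vec d A" and B: "subspace_vec d B" and AB: "A \<inter> B = {0\<^sub>v d}"
    and sum: "\<forall>v\<in>carrier_vec d. \<exists>a\<in>A. \<exists>b\<in>B. v = a + b"
    and fA: "f ` A \<subseteq> B" and fB: "f ` B \<subseteq> A"
  shows "f ` A = B"
proof
  show "B \<subseteq> f ` A"
  proof
    fix w assume w: "w \<in> B"
    have w_carrier: "w \<in> carrier_vec d" using subspace_vec_carrier[OF B w] .
    obtain a b where ab: "a \<in> A" "b \<in> B" "g w = a + b"
      using sum g_carrier[OF w_carrier] by blast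
    have a_b_carrier: "a \<in> carrier_vec d" "b \<in> carrier_vec d"
      using ab subspace_vec_carrier[OF A] subspace_vec_carrier[OF B] by auto
    have w_eq: "w = f a + f b" using f_g[OF w_carrier] ab(3) f_add[OF a_b_carrier] by simp
    moreover have "f a \<in> carrier_vec d" "f b \<in> carrier_vec d" using f_carrier a_b_carrier by auto
    ultimately have "f b = w - f a" by (intro eq_vecI) auto
    hence "f b \<in> B" using subspace_vec_diff[OF B w] fA ab(1) by auto
    moreover have "f b \<in> A" using fB ab(2) by auto
    ultimately have "f b = 0\<^sub>v d" using AB by blast
    hence "w = f a" using w_eq f_carrier a_b_carrier by simp
    thus "w \<in> f ` A" using ab(1) by blast
  qed
qed (use fA in blast)

end

lemma Dgen_nonzero [simp]: "i \<noteq> 0 \<Longrightarrow> Dgen \<rho> i = \<rho> i"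
  unfolding Dgen_def by simp

lemma Dgens_eq: "2 \<le> n \<Longrightarrow> Dgens n = {..<n}"
  unfolding Dgens_def by simp

locale HB_module =
  fixes q :: "'k::field" and n d :: nat and \<rho> :: "nat \<Rightarrow> 'k mat"
  assumes rep: "HB_rep q n d \<rho>" and q_nonzero: "q \<noteq> 0"
begin

abbreviation T :: "nat \<Rightarrow> 'k vec \<Rightarrow> 'k vec" where
  "T i \<equiv> mult_mat_vec (\<rho> i)"

lemma gen_carrier: "i < n \<Longrightarrow> \<rho> i \<in> carrier_mat d d"
  using rep unfolding HB_rep_def by blast

lemma T_carrier: "i < n \<Longrightarrow> v \<in> carrier_vec d \<Longrightarrow> T i v \<in> carrier_vec d"
  using gen_carrier by (metis mult_mat_vec_carrier)

lemma T_add: "i < n \<Longrightarrow> u \<in> carrier_vec d \<Longrightarrow> v \<in> carrier_vec d \<Longrightarrow> T i (u + v) = T i u + T i v"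
  using gen_carrier by (metis mult_add_distrib_mat_vec)

lemma T_smult: "i < n \<Longrightarrow> v \<in> carrier_vec d \<Longrightarrow> T i (c \<cdot>\<^sub>v v) = c \<cdot>\<^sub>v T i v"
  using gen_carrier by (metis mult_mat_vec)

lemma T0_T0: assumes "0 < n" "v \<in> carrier_vec d" shows "T 0 (T 0 v) = v"
proof -
  have "\<rho> 0 * \<rho> 0 = 1\<^sub>m d" using rep assms(1) unfolding HB_rep_def by blast
  thus ?thesis using assms gen_carrier[of 0] assoc_mult_mat_vec[of "\<rho> 0" d d "\<rho> 0" d v] by simp
qed

lemma T_quadratic:
  assumes i: "1 \<le> i" "i < n" and v: "v \<in> carrier_vec d"
  shows "T i (T i v) = (q - 1) \<cdot>\<^sub>v T i v + q \<cdot>\<^sub>v v"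
proof -
  have A: "\<rho> i \<in> carrier_mat d d" using gen_carrier i by auto
  have "(\<rho> i + 1\<^sub>m d) * (\<rho> i - q \<cdot>\<^sub>m 1\<^sub>m d) = 0\<^sub>m d d" using rep i unfolding HB_rep_def by blast
  hence "((\<rho> i + 1\<^sub>m d) * (\<rho> i - q \<cdot>\<^sub>m 1\<^sub>m d)) *\<^sub>v v = 0\<^sub>v d" using v by auto
  hence "(\<rho> i + 1\<^sub>m d) *\<^sub>v ((\<rho> i - q \<cdot>\<^sub>m 1\<^sub>m d) *\<^sub>v v) = 0\<^sub>v d"
    using A v by (subst (asm) assoc_mult_mat_vec[of _ d d _ d]) auto
  moreover have "(\<rho> i - q \<cdot>\<^sub>m 1\<^sub>m d) *\<^sub>v v = T i v - q \<cdot>\<^sub>v v"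
    using A v by (subst minus_mult_distrib_mat_vec[of _ d d]) auto
  ultimately have "T i (T i v - q \<cdot>\<^sub>v v) + (T i v - q \<cdot>\<^sub>v v) = 0\<^sub>v d"
    using A v by (simp add: add_mult_distrib_mat_vec[of _ d d])
  hence "T i (T i v) - q \<cdot>\<^sub>v T i v + (T i v - q \<cdot>\<^sub>v v) = 0\<^sub>v d"
    using A v by (simp add: mult_minus_distrib_mat_vec[of _ d d] mult_mat_vec[of _ d d])
  hence "\<forall>j<d. T i (T i v) $ j - q * T i v $ j + (T i v $ j - q * v $ j) = 0"
    using A v by (auto simp: vec_eq_iff)
  thus ?thesis using A v
    by (intro eq_vecI) (auto simp: algebra_simps eq_neg_iff_add_eq_0 diff_eq_eq)
qed

lemma T_braid_01:
  assumes "2 \<le> n" "v \<in> carrier_vec d"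
  shows "T 0 (T 1 (T 0 (T 1 v))) = T 1 (T 0 (T 1 (T 0 v)))"
proof -
  have "\<rho> 0 * \<rho> 1 * \<rho> 0 * \<rho> 1 = \<rho> 1 * \<rho> 0 * \<rho> 1 * \<rho> 0" using rep assms(1) unfolding HB_rep_def by blast
  hence "(\<rho> 0 * \<rho> 1 * \<rho> 0 * \<rho> 1) *\<^sub>v v = (\<rho> 1 * \<rho> 0 * \<rho> 1 * \<rho> 0) *\<^sub>v v" by simp
  thus ?thesis using gen_carrier[of 0] gen_carrier[of 1] assms by (simp add: assoc_mult_mat_vec[of _ d d _ d])
qed

lemma T_braid:
  assumes "1 \<le> i" "i + 1 < n" "v \<in> carrier_vec d"
  shows "T i (T (i + 1) (T i v)) = T (i + 1) (T i (T (i + 1) v))"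
proof -
  have "\<rho> i * \<rho> (i + 1) * \<rho> i = \<rho> (i + 1) * \<rho> i * \<rho> (i + 1)" using rep assms unfolding HB_rep_def by blast
  hence "(\<rho> i * \<rho> (i + 1) * \<rho> i) *\<^sub>v v = (\<rho> (i + 1) * \<rho> i * \<rho> (i + 1)) *\<^sub>v v" by simp
  thus ?thesis using gen_carrier[of i] gen_carrier[of "i + 1"] assms
    by (simp add: assoc_mult_mat_vec[of _ d d _ d])
qed

lemma T_commute:
  assumes "i + 1 < j" "j < n" "v \<in> carrier_vec d"
  shows "T i (T j v) = T j (T i v)"
proof -
  have "i < n" using assms by simp
  hence "\<rho> i * \<rho> j = \<rho> j * \<rho> i" using rep assms unfolding HB_rep_def by blast
  hence "(\<rho> i * \<rho> j) *\<^sub>v v = (\<rho> j * \<rho> i) *\<^sub>v v" by simp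
  thus ?thesis using gen_carrier[of i] gen_carrier[of j] assms by (simp add: assoc_mult_mat_vec[of _ d d _ d])
qed

definition T_inv :: "nat \<Rightarrow> 'k vec \<Rightarrow> 'k vec" where
  "T_inv i v = (if i = 0 then T 0 v else (1 / q) \<cdot>\<^sub>v (T i v - (q - 1) \<cdot>\<^sub>v v))"

lemma T_inv_carrier: "i < n \<Longrightarrow> v \<in> carrier_vec d \<Longrightarrow> T_inv i v \<in> carrier_vec d"
  unfolding T_inv_def using T_carrier by auto

lemma T_T_inv:
  assumes "i < n" "v \<in> carrier_vec d"
  shows "T i (T_inv i v) = v" and "T_inv i (T i v) = v"
proof -
  have "T i (T_inv i v) = v \<and> T_inv i (T i v) = v"
  proof (cases "i = 0")
    case True thus ?thesis using T0_T0 assms unfolding T_inv_def by auto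
  next
    case False
    have A: "\<rho> i \<in> carrier_mat d d" using gen_carrier assms by auto
    let ?w = "(1 / q) \<cdot>\<^sub>v (T i (T i v) - (q - 1) \<cdot>\<^sub>v T i v)"
    have "T i (T_inv i v) = ?w"
      unfolding T_inv_def using False A assms
      by (simp add: mult_mat_vec[of _ d d] mult_minus_distrib_mat_vec[of _ d d])
    moreover have "T_inv i (T i v) = ?w" unfolding T_inv_def using False by simp
    moreover have "T i (T i v) = (q - 1) \<cdot>\<^sub>v T i v + q \<cdot>\<^sub>v v"
      using T_quadratic False assms by simp
    hence "?w = v"
      using A assms q_nonzero
      by (intro eq_vecI) (auto simp: field_simps)
    ultimately show ?thesis by simp
  qed
  thus "T i (T_inv i v) = v" "T_inv i (T i v) = v" by auto
qed

text \<open>Up to the factor \<open>q\<^sup>k\<close>, \<open>jm k\<close> is the action of the Jucys--Murphy element \<open>L\<^sub>k\<^sub>+\<^sub>1\<close> of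
  \<open>\<H>(B\<^sub>n)\<close>.\<close>

primrec jm :: "nat \<Rightarrow> 'k vec \<Rightarrow> 'k vec" where
  "jm 0 v = T 0 v"
| "jm (Suc k) v = T (Suc k) (jm k (T (Suc k) v))"

primrec jm_inv :: "nat \<Rightarrow> 'k vec \<Rightarrow> 'k vec" where
  "jm_inv 0 v = T 0 v"
| "jm_inv (Suc k) v = T_inv (Suc k) (jm_inv k (T_inv (Suc k) v))"

lemma jm_carrier: "k < n \<Longrightarrow> v \<in> carrier_vec d \<Longrightarrow> jm k v \<in> carrier_vec d"
  by (induction k arbitrary: v) (auto simp: T_carrier)

lemma jm_inv_carrier: "k < n \<Longrightarrow> v \<in> carrier_vec d \<Longrightarrow> jm_inv k v \<in> carrier_vec d"
  by (induction k arbitrary: v) (auto simp: T_carrier T_inv_carrier)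

lemma jm_jm_inv: "k < n \<Longrightarrow> v \<in> carrier_vec d \<Longrightarrow> jm k (jm_inv k v) = v \<and> jm_inv k (jm k v) = v"
  by (induction k arbitrary: v) (auto simp: T0_T0 T_T_inv T_carrier T_inv_carrier jm_carrier jm_inv_carrier)

lemma jm_add: "k < n \<Longrightarrow> u \<in> carrier_vec d \<Longrightarrow> v \<in> carrier_vec d \<Longrightarrow> jm k (u + v) = jm k u + jm k v"
  by (induction k arbitrary: u v) (auto simp: T_add T_carrier jm_carrier)

lemma jm_smult: "k < n \<Longrightarrow> v \<in> carrier_vec d \<Longrightarrow> jm k (c \<cdot>\<^sub>v v) = c \<cdot>\<^sub>v jm k v"
  by (induction k arbitrary: v) (auto simp: T_smult T_carrier jm_carrier)

lemma T_jm_commute_above: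
  "k + 1 < j \<Longrightarrow> j < n \<Longrightarrow> v \<in> carrier_vec d \<Longrightarrow> T j (jm k v) = jm k (T j v)"
proof (induction k arbitrary: v)
  case 0 thus ?case using T_commute[of 0 j v] by simp
next
  case (Suc k)
  have "T j (jm (Suc k) v) = T (Suc k) (T j (jm k (T (Suc k) v)))"
    using Suc by (simp add: T_carrier jm_carrier T_commute[of "Suc k" j, symmetric])
  also have "\<dots> = T (Suc k) (jm k (T j (T (Suc k) v)))"
    using Suc by (simp add: T_carrier)
  also have "\<dots> = jm (Suc k) (T j v)"
    using Suc T_commute[of "Suc k" j] by (simp add: T_carrier)
  finally show ?case .
qed

lemma T0_jm_commute: "1 \<le> k \<Longrightarrow> k < n \<Longrightarrow> v \<in> carrier_vec d \<Longrightarrow> T 0 (jm k v) = jm k (T 0 v)"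
proof (induction k arbitrary: v)
  case 0 thus ?case by simp
next
  case (Suc k)
  show ?case
  proof (cases "k = 0")
    case True thus ?thesis using Suc T_braid_01[of v] by simp
  next
    case False
    have "T 0 (jm (Suc k) v) = T (Suc k) (T 0 (jm k (T (Suc k) v)))"
      using Suc False by (simp add: T_carrier jm_carrier T_commute[of 0 "Suc k"])
    also have "\<dots> = T (Suc k) (jm k (T 0 (T (Suc k) v)))"
      using Suc False by (simp add: T_carrier)
    also have "\<dots> = jm (Suc k) (T 0 v)"
      using Suc False T_commute[of 0 "Suc k"] by (simp add: T_carrier)
    finally show ?thesis .
  qed
qed

lemma T_jm_commute_below:
  "1 \<le> j \<Longrightarrow> j < k \<Longrightarrow> k < n \<Longrightarrow> v \<in> carrier_vec d \<Longrightarrow> T j (jm k v) = jm k (T j v)"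
proof (induction k arbitrary: v)
  case 0 thus ?case by simp
next
  case (Suc k)
  show ?case
  proof (cases "j < k")
    case True
    have "T j (jm (Suc k) v) = T (Suc k) (T j (jm k (T (Suc k) v)))"
      using Suc True by (simp add: T_carrier jm_carrier T_commute[of j "Suc k"])
    also have "\<dots> = T (Suc k) (jm k (T j (T (Suc k) v)))"
      using Suc True by (simp add: T_carrier)
    also have "\<dots> = jm (Suc k) (T j v)"
      using Suc True T_commute[of j "Suc k"] by (simp add: T_carrier)
    finally show ?thesis .
  next
    case False
    hence j: "j = k" using Suc by simp
    then obtain m where k: "k = Suc m" using Suc by (cases k) auto
    have kn: "k < n" "Suc k < n" "m < n" using Suc k by auto
    have commute: "T (Suc k) (jm m w) = jm m (T (Suc k) w)" if "w \<in> carrier_vec d" for w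
      using T_jm_commute_above[of m "Suc k"] Suc k that by simp
    have braid: "T k (T (Suc k) (T k w)) = T (Suc k) (T k (T (Suc k) w))" if "w \<in> carrier_vec d" for w
      using T_braid[of k] Suc j that by simp
    note carrier = T_carrier[OF kn(1)] T_carrier[OF kn(2)] jm_carrier[OF kn(3)]
    have "jm (Suc k) (T k v) = T (Suc k) (T k (jm m (T k (T (Suc k) (T k v)))))"
      using k by simp
    also have "\<dots> = T (Suc k) (T k (jm m (T (Suc k) (T k (T (Suc k) v)))))"
      using braid Suc by simp
    also have "\<dots> = T (Suc k) (T k (T (Suc k) (jm m (T k (T (Suc k) v)))))"
      using commute Suc carrier by simp
    also have "\<dots> = T k (T (Suc k) (T k (jm m (T k (T (Suc k) v)))))"
      using braid Suc carrier by simp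
    also have "\<dots> = T k (jm (Suc k) v)"
      using k by simp
    finally show ?thesis using j by simp
  qed
qed

lemma Dgen_carrier: "2 \<le> n \<Longrightarrow> i < n \<Longrightarrow> Dgen \<rho> i \<in> carrier_mat d d"
  unfolding Dgen_def using gen_carrier[of 0] gen_carrier[of 1] gen_carrier[of i] by auto

lemma Dgen_0_mult_vec:
  assumes "2 \<le> n" "v \<in> carrier_vec d"
  shows "Dgen \<rho> 0 *\<^sub>v v = T 0 (T 1 (T 0 v))"
  unfolding Dgen_def using assms gen_carrier[of 0] gen_carrier[of 1]
  by (simp add: assoc_mult_mat_vec[of _ d d _ d])

lemma D_submodule_act:
  "2 \<le> n \<Longrightarrow> invariant d (Dgens n) (Dgen \<rho>) W \<Longrightarrow> i < n \<Longrightarrow> w \<in> W \<Longrightarrow> Dgen \<rho> i *\<^sub>v w \<in> W"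
  using invariant_act Dgens_eq by blast

lemma T0_module_endo: "0 < n \<Longrightarrow> module_endo d {} \<rho> (T 0)"
  by unfold_locales (auto simp: T_carrier T_add T_smult)

text \<open>\<open>T\<^sub>0\<close> commutes with \<open>T\<^sub>2, \<dots>, T\<^sub>k\<close>, so
  \<open>T\<^sub>0 T\<^sub>k \<cdots> T\<^sub>1 T\<^sub>0 T\<^sub>1 \<cdots> T\<^sub>k = T\<^sub>k \<cdots> T\<^sub>2 (T\<^sub>0 T\<^sub>1 T\<^sub>0) T\<^sub>1 \<cdots> T\<^sub>k\<close> lies in \<open>\<H>(D\<^sub>n)\<close>.\<close>

lemma T0_jm_mem_D_submodule:
  assumes n: "2 \<le> n" and W: "invariant d (Dgens n) (Dgen \<rho>) W"
  shows "1 \<le> k \<Longrightarrow> k < n \<Longrightarrow> v \<in> W \<Longrightarrow> T 0 (jm k v) \<in> W"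
proof (induction k arbitrary: v)
  case 0 thus ?case by simp
next
  case (Suc k)
  have act: "\<And>i w. i < n \<Longrightarrow> w \<in> W \<Longrightarrow> Dgen \<rho> i *\<^sub>v w \<in> W"
    using D_submodule_act[OF n W] .
  have v: "v \<in> carrier_vec d" using subspace_vec_carrier[OF invariant_subspace[OF W] Suc.prems(3)] .
  have Tv: "T (Suc k) v \<in> W" using act[of "Suc k" v] Suc.prems by simp
  show ?case
  proof (cases "k = 0")
    case True
    hence "Dgen \<rho> 0 *\<^sub>v T 1 v \<in> W" using act n Tv by simp
    thus ?thesis using True Dgen_0_mult_vec[OF n] v n by (simp add: T_carrier)
  next
    case False
    hence "T 0 (jm k (T (Suc k) v)) \<in> W" using Suc Tv by simp
    hence "T (Suc k) (T 0 (jm k (T (Suc k) v))) \<in> W"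
      using act[of "Suc k"] Suc.prems by simp
    thus ?thesis using Suc.prems False v by (simp add: T_carrier jm_carrier T_commute[of 0 "Suc k"])
  qed
qed

text \<open>Conjugation by \<open>T\<^sub>0\<close> swaps \<open>T\<^sub>0 T\<^sub>1 T\<^sub>0\<close> and \<open>T\<^sub>1\<close> and fixes \<open>T\<^sub>i\<close> for \<open>i \<ge> 2\<close>.\<close>

lemma invariant_T0_image:
  assumes n: "2 \<le> n" and W: "invariant d (Dgens n) (Dgen \<rho>) W"
  shows "invariant d (Dgens n) (Dgen \<rho>) (T 0 ` W)"
  unfolding invariant_def
proof (intro conjI ballI)
  have sW: "subspace_vec d W" using invariant_subspace[OF W] .
  show "subspace_vec d (T 0 ` W)"
    using module_endo.subspace_vec_image[OF T0_module_endo sW] n by simp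
  have act: "\<And>i w. i < n \<Longrightarrow> w \<in> W \<Longrightarrow> Dgen \<rho> i *\<^sub>v w \<in> W"
    using D_submodule_act[OF n W] .
  fix i y assume i: "i \<in> Dgens n" and "y \<in> T 0 ` W"
  then obtain v where v: "v \<in> W" "y = T 0 v" by auto
  have vc: "v \<in> carrier_vec d" using subspace_vec_carrier[OF sW v(1)] .
  have i_n: "i < n" using i Dgens_eq[OF n] by simp
  consider "i = 0" | "i = 1" | "2 \<le> i" by linarith
  thus "Dgen \<rho> i *\<^sub>v y \<in> T 0 ` W"
  proof cases
    case 1
    have "Dgen \<rho> i *\<^sub>v y = T 0 (T 1 v)" using 1 v vc n Dgen_0_mult_vec by (simp add: T_carrier T0_T0)
    moreover have "T 1 v \<in> W" using act[of 1 v] v n by simp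
    ultimately show ?thesis by blast
  next
    case 2
    have "Dgen \<rho> i *\<^sub>v y = T 0 (Dgen \<rho> 0 *\<^sub>v v)"
      using 2 v vc n Dgen_0_mult_vec by (simp add: T_carrier T0_T0)
    moreover have "Dgen \<rho> 0 *\<^sub>v v \<in> W" using act[of 0 v] v n by simp
    ultimately show ?thesis by blast
  next
    case 3
    have "Dgen \<rho> i *\<^sub>v y = T 0 (T i v)" using 3 v vc i_n T_commute[of 0 i v] by simp
    moreover have "T i v \<in> W" using act[of i v] v i_n 3 by simp
    ultimately show ?thesis by blast
  qed
qed

lemma T0_image_nonzero:
  assumes n: "0 < n" and sW: "subspace_vec d W" and W: "\<exists>x\<in>W. x \<noteq> 0\<^sub>v d"
  shows "\<exists>y\<in>T 0 ` W. y \<noteq> 0\<^sub>v d"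
proof -
  obtain x where x: "x \<in> W" "x \<noteq> 0\<^sub>v d" using W by blast
  have "T 0 x \<noteq> 0\<^sub>v d"
  proof
    assume "T 0 x = 0\<^sub>v d"
    hence "T 0 (T 0 x) = 0\<^sub>v d" using module_endo.f_zero[OF T0_module_endo[OF n]] by simp
    thus False using T0_T0[OF n subspace_vec_carrier[OF sW x(1)]] x(2) by simp
  qed
  thus ?thesis using x by blast
qed

lemma T0_image_T0_image:
  assumes "0 < n" "W \<subseteq> carrier_vec d" shows "T 0 ` T 0 ` W = W"
proof -
  have "(\<lambda>v. T 0 (T 0 v)) ` W = (\<lambda>v. v) ` W"
    by (rule image_cong) (use assms T0_T0 in auto)
  thus ?thesis by (simp add: image_image)
qed

lemma B_invariant_of_T0_stable:
  assumes n: "2 \<le> n" and W: "invariant d (Dgens n) (Dgen \<rho>) W" and stable: "T 0 ` W \<subseteq> W"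
  shows "invariant d {..<n} \<rho> W"
  unfolding invariant_def
proof (intro conjI ballI)
  show "subspace_vec d W" using invariant_subspace[OF W] .
  fix i v assume i: "i \<in> {..<n}" and v: "v \<in> W"
  have vc: "v \<in> carrier_vec d" using subspace_vec_carrier[OF invariant_subspace[OF W] v] .
  consider "i = 0" | "i = 1" | "2 \<le> i" by linarith
  thus "\<rho> i *\<^sub>v v \<in> W"
  proof cases
    case 1 thus ?thesis using stable v by blast
  next
    case 2
    have "Dgen \<rho> 0 *\<^sub>v T 0 v \<in> W" using D_submodule_act[OF n W] stable v n by auto
    hence "T 0 (Dgen \<rho> 0 *\<^sub>v T 0 v) \<in> W" using stable by blast
    moreover have "T 0 (Dgen \<rho> 0 *\<^sub>v T 0 v) = T 1 v"
      using Dgen_0_mult_vec[OF n] vc n by (simp add: T_carrier T0_T0)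
    ultimately show ?thesis using 2 by simp
  next
    case 3 thus ?thesis using D_submodule_act[OF n W, of i v] i v by simp
  qed
qed

lemma jm_module_auto:
  assumes n: "2 \<le> n"
  shows "module_auto d (Dgens (n - 1)) (Dgen \<rho>) (jm (n - 1)) (jm_inv (n - 1))"
proof (intro module_auto.intro module_endo.intro module_auto_axioms.intro)
  have k: "n - 1 < n" "1 \<le> n - 1" using n by auto
  fix v :: "'k vec" assume "v \<in> carrier_vec d"
  thus "jm (n - 1) v \<in> carrier_vec d" "jm_inv (n - 1) v \<in> carrier_vec d"
    "jm (n - 1) (jm_inv (n - 1) v) = v" "jm_inv (n - 1) (jm (n - 1) v) = v"
    using jm_carrier jm_inv_carrier jm_jm_inv k by auto
next
  fix u v :: "'k vec" assume "u \<in> carrier_vec d" "v \<in> carrier_vec d"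
  thus "jm (n - 1) (u + v) = jm (n - 1) u + jm (n - 1) v" using jm_add n by auto
next
  fix c and v :: "'k vec" assume "v \<in> carrier_vec d"
  thus "jm (n - 1) (c \<cdot>\<^sub>v v) = c \<cdot>\<^sub>v jm (n - 1) v" using jm_smult n by auto
next
  fix i assume "i \<in> Dgens (n - 1)"
  hence "i < n" unfolding Dgens_def by (auto split: if_splits)
  thus "Dgen \<rho> i \<in> carrier_mat d d" using Dgen_carrier n by auto
next
  fix i and v :: "'k vec" assume i: "i \<in> Dgens (n - 1)" and v: "v \<in> carrier_vec d"
  have n3: "3 \<le> n" and i_n: "i < n - 1" using i unfolding Dgens_def by (auto split: if_splits)
  have k: "n - 1 < n" "1 \<le> n - 1" using n by auto
  show "jm (n - 1) (Dgen \<rho> i *\<^sub>v v) = Dgen \<rho> i *\<^sub>v jm (n - 1) v"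
  proof (cases "i = 0")
    case True
    have "jm (n - 1) (Dgen \<rho> i *\<^sub>v v) = jm (n - 1) (T 0 (T 1 (T 0 v)))"
      using True Dgen_0_mult_vec[OF n v] by simp
    also have "\<dots> = T 0 (jm (n - 1) (T 1 (T 0 v)))"
      using T0_jm_commute[OF k(2,1)] T_carrier v n by simp
    also have "\<dots> = T 0 (T 1 (jm (n - 1) (T 0 v)))"
      using T_jm_commute_below[of 1 "n - 1"] T_carrier v n3 by simp
    also have "\<dots> = T 0 (T 1 (T 0 (jm (n - 1) v)))"
      using T0_jm_commute[OF k(2,1)] v by simp
    also have "\<dots> = Dgen \<rho> i *\<^sub>v jm (n - 1) v"
      using True Dgen_0_mult_vec[OF n] jm_carrier[OF k(1) v] by simp
    finally show ?thesis .
  next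
    case False
    thus ?thesis using T_jm_commute_below[of i "n - 1" v] i_n v by simp
  qed
qed

end

locale HB_module_D_split = HB_module +
  fixes Wp Wm
  assumes two_le_n: "2 \<le> n"
    and irreducible: "irreducible_rep d {..<n} \<rho>"
    and Wp: "simple_sub d (Dgens n) (Dgen \<rho>) Wp"
    and Wm: "simple_sub d (Dgens n) (Dgen \<rho>) Wm"
    and disjoint: "Wp \<inter> Wm = {0\<^sub>v d}"
    and spanning: "\<forall>v\<in>carrier_vec d. \<exists>u\<in>Wp. \<exists>w\<in>Wm. v = u + w"
    and not_iso: "\<not> module_iso (Dgens n) (Dgen \<rho>) Wp (Dgen \<rho>) Wm"
begin

lemma Wp_carrier: "Wp \<subseteq> carrier_vec d"
  using subspace_vec_carrier[OF invariant_subspace[OF simple_sub_invariant[OF Wp]]] by blast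

lemma Wm_carrier: "Wm \<subseteq> carrier_vec d"
  using subspace_vec_carrier[OF invariant_subspace[OF simple_sub_invariant[OF Wm]]] by blast

lemma Wp_not_T0_stable: "\<not> T 0 ` Wp \<subseteq> Wp"
proof
  assume "T 0 ` Wp \<subseteq> Wp"
  hence "invariant d {..<n} \<rho> Wp"
    using B_invariant_of_T0_stable[OF two_le_n simple_sub_invariant[OF Wp]] by blast
  hence "Wp = {0\<^sub>v d} \<or> Wp = carrier_vec d"
    using simple_sub_minimal irreducible Wp_carrier unfolding irreducible_rep_def by blast
  moreover have "Wp \<noteq> {0\<^sub>v d}" "Wm \<noteq> {0\<^sub>v d}" using Wp Wm unfolding simple_sub_def by blast+
  ultimately show False using disjoint Wm_carrier by blast
qed

lemma T0_image_Wp: "T 0 ` Wp = Wm"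
proof -
  let ?X = "T 0 ` Wp"
  have n: "0 < n" using two_le_n by simp
  have X: "invariant d (Dgens n) (Dgen \<rho>) ?X"
    using invariant_T0_image[OF two_le_n simple_sub_invariant[OF Wp]] .
  have X_nonzero: "\<exists>x\<in>?X. x \<noteq> 0\<^sub>v d"
    using T0_image_nonzero[OF n invariant_subspace[OF simple_sub_invariant[OF Wp]] simple_sub_nonzero[OF Wp]] .
  have T0_X: "T 0 ` ?X = Wp" using T0_image_T0_image[OF n Wp_carrier] .
  have "?X \<inter> Wm \<noteq> {0\<^sub>v d}"
  proof
    assume XWm: "?X \<inter> Wm = {0\<^sub>v d}"
    have "?X \<inter> Wp \<noteq> Wp"
    proof
      assume "?X \<inter> Wp = Wp"
      hence "T 0 ` Wp \<subseteq> T 0 ` ?X" by blast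
      thus False using Wp_not_T0_stable T0_X by simp
    qed
    hence XWp: "?X \<inter> Wp = {0\<^sub>v d}"
      using simple_sub_minimal[OF Wp invariant_Int[OF X simple_sub_invariant[OF Wp]]] by blast
    have "\<forall>x\<in>?X. \<exists>a\<in>Wp. \<exists>b\<in>Wm. x = a + b"
      using spanning subspace_vec_carrier[OF invariant_subspace[OF X]] by blast
    moreover have "\<And>i. i \<in> Dgens n \<Longrightarrow> Dgen \<rho> i \<in> carrier_mat d d"
      using Dgen_carrier[OF two_le_n] Dgens_eq[OF two_le_n] by blast
    ultimately have "module_iso (Dgens n) (Dgen \<rho>) Wp (Dgen \<rho>) Wm"
      using module_iso_of_diagonal_submodule[OF Wp Wm X _ XWp XWm X_nonzero] by blast
    thus False using not_iso by blast
  qed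
  hence "?X \<inter> Wm = Wm"
    using simple_sub_minimal[OF Wm invariant_Int[OF X simple_sub_invariant[OF Wm]]] by blast
  hence "T 0 ` Wm \<subseteq> Wp" using T0_X by blast
  moreover have "invariant d (Dgens n) (Dgen \<rho>) (T 0 ` Wm)"
    using invariant_T0_image[OF two_le_n simple_sub_invariant[OF Wm]] .
  moreover have "T 0 ` Wm \<noteq> {0\<^sub>v d}"
    using T0_image_nonzero[OF n invariant_subspace[OF simple_sub_invariant[OF Wm]] simple_sub_nonzero[OF Wm]]
    by auto
  ultimately have "T 0 ` Wm = Wp" using simple_sub_minimal[OF Wp] by blast
  thus ?thesis using T0_image_T0_image[OF n Wm_carrier] by simp
qed

lemma jm_image_Wp: "jm (n - 1) ` Wp = Wm"
proof -
  interpret L: module_auto d "Dgens (n - 1)" "Dgen \<rho>" "jm (n - 1)" "jm_inv (n - 1)"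
    using jm_module_auto[OF two_le_n] .
  have n: "0 < n" and k: "1 \<le> n - 1" "n - 1 < n" using two_le_n by auto
  have T0_Wm: "T 0 ` Wm = Wp" using T0_image_T0_image[OF n Wp_carrier] T0_image_Wp by simp
  have swap: "jm (n - 1) v \<in> T 0 ` W"
    if W: "W = Wp \<or> W = Wm" and v: "v \<in> W" for W v
  proof -
    have "W \<subseteq> carrier_vec d" "invariant d (Dgens n) (Dgen \<rho>) W"
      using W Wp_carrier Wm_carrier simple_sub_invariant[OF Wp] simple_sub_invariant[OF Wm] by auto
    hence "T 0 (jm (n - 1) v) \<in> W" "jm (n - 1) v \<in> carrier_vec d"
      using T0_jm_mem_D_submodule[OF two_le_n _ k v] jm_carrier[OF k(2)] v by auto
    thus ?thesis using T0_T0[OF n] by (metis image_eqI)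
  qed
  show ?thesis
  proof (rule L.image_eq_of_swapping_summands)
    show "jm (n - 1) ` Wp \<subseteq> Wm" using swap T0_image_Wp by blast
    show "jm (n - 1) ` Wm \<subseteq> Wp" using swap T0_Wm by blast
  qed (use invariant_subspace simple_sub_invariant Wp Wm disjoint spanning in blast)+
qed

end

theorem theorem3p10:
  fixes q :: "'k::field" and n d :: nat and \<rho> :: "nat \<Rightarrow> 'k mat"
    and Wp Wm :: "'k vec set"
  assumes char: "(2::'k) \<noteq> 0"
    and q_unit: "q \<noteq> 0"
    and prod0: "(\<Prod>i=1..n-1. 1 + q ^ i) = 0"
    and splitn: "HD_split q n"
    and splitn1: "HD_split q (n - 1)"
    and rep: "HB_rep q n d \<rho>"
    and simple: "irreducible_rep d {..<n} \<rho>"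
    and fixed: "module_iso {..<n} \<rho> (carrier_vec d) (sigma_twist \<rho>) (carrier_vec d)"
    and Wp: "simple_sub d (Dgens n) (Dgen \<rho>) Wp"
    and Wm: "simple_sub d (Dgens n) (Dgen \<rho>) Wm"
    and disj: "Wp \<inter> Wm = {0\<^sub>v d}"
    and span: "\<forall>v\<in>carrier_vec d. \<exists>u\<in>Wp. \<exists>w\<in>Wm. v = u + w"
    and noniso: "\<not> module_iso (Dgens n) (Dgen \<rho>) Wp (Dgen \<rho>) Wm"
  shows "module_iso (Dgens (n - 1)) (Dgen \<rho>)
           (socle d (Dgens (n - 1)) (Dgen \<rho>) Wp)
           (Dgen \<rho>) (socle d (Dgens (n - 1)) (Dgen \<rho>) Wm)"
proof -
  have n: "2 \<le> n"
  proof (rule ccontr)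
    assume "\<not> 2 \<le> n"
    hence "{1..n - 1} = {}" by auto
    thus False using prod0 by simp
  qed
  interpret HB_module_D_split q n d \<rho> Wp Wm
    by unfold_locales (fact rep q_unit n simple Wp Wm disj span noniso)+
  show ?thesis
    using module_auto.module_iso_socle_image[OF jm_module_auto[OF n] Wp_carrier] jm_image_Wp by simp
qed

end
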